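(* Let $\mathcal{X}$ be a compact metric space with a finite Borel measure $\mu$, and let $\boldsymbol{k}(\mathbf{x},\mathbf{z})=\sum_{k=1}^\infty \lambda_k\Phi_k(\mathbf{x})\Phi_k(\mathbf{z})$ be a positive definite (Mercer) kernel on $\mathcal{X}$, where $\lambda_k$ and $\Phi_k$ are the eigenvalues and ($L^2_\mu$-orthonormal) eigenfunctions of its integral operator. Let $g:\mathbb{R}\to\mathbb{R}$ be non-negative and $L$-Lipschitz, and let $\boldsymbol{k}_g(\mathbf{x},\mathbf{z}):=\sum_{k=1}^\infty g(\lambda_k)\Phi_k(\mathbf{x})\Phi_k(\mathbf{z})$ be the associated Modified Spectrum Kernel. Assume there is $M$ with $|\Phi_i(\mathbf{x})|\le M$ for all $i$ and all $\mathbf{x}\in\mathcal{X}$. Let $\mathbf{x}_1,\dots,\mathbf{x}_n\in\mathcal{X}$ be i.i.d. samples drawn from $\mu$, and let $K,K_g\in\mathbb{R}^{n\times n}$ be the kernel matrices $K_{ij}=\frac1n\boldsymbol{k}(\mathbf{x}_i,\mathbf{x}_j)$, $(K_g)_{ij}=\frac1n\boldsymbol{k}_g(\mathbf{x}_i,\mathbf{x}_j)$. Define $\tilde K_g=VDV^T$, where $V=(\mathbf{v}_1,\dots,\mathbf{v}_n)$ with $\mathbf{v}_i$ the $i$-th (unit) eigenvector of $K$, and $D$ is diagonal with $D_{ii}=g(\hat\lambda_i)$, $\hat\lambda_i$ being the $i$-th eigenvalue of $K$. Then, as $n\to\infty$, $$\|\tilde K_g-K_g\|_F\to 0\quad\text{almost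 surely.}$$
   Context: For a positive definite kernel $\boldsymbol{k}$ on $\mathcal{X}$, its integral operator $L_{\boldsymbol{k}}f(\mathbf{x})=\int_{\mathcal{X}}\boldsymbol{k}(\mathbf{x},\mathbf{z})f(\mathbf{z})\,d\mu(\mathbf{z})$ is compact, positive and self-adjoint on $L^2_\mu(\mathcal{X})$, with eigen-decomposition $L_{\boldsymbol{k}}\Phi_i=\lambda_i\Phi_i$, and by Mercer's theorem $\boldsymbol{k}(\mathbf{x},\mathbf{z})=\sum_i\lambda_i\Phi_i(\mathbf{x})\Phi_i(\mathbf{z})$. The Modified Spectrum Kernel $\boldsymbol{k}_g$ has the same eigenfunctions as $\boldsymbol{k}$ with eigenvalues $g(\lambda_k)$ (assumed to define a Mercer kernel). The eigenvalues of $K$ are listed together with a corresponding orthonormal eigenbasis $\mathbf{v}_1,\dots,\mathbf{v}_n$. *)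

theory Defs
  imports "HOL-Probability.Probability"
begin

definition pd_kernel :: "('a \<Rightarrow> 'a \<Rightarrow> real) \<Rightarrow> bool" where
  "pd_kernel k \<longleftrightarrow> (\<forall>x y. k x y = k y x) \<and>
     (\<forall>(m::nat) (xs::nat \<Rightarrow> 'a) (c::nat \<Rightarrow> real).
        0 \<le> (\<Sum>i<m. \<Sum>j<m. c i * c j * k (xs i) (xs j)))"

definition mercer_kernel :: "('a::metric_space \<Rightarrow> 'a \<Rightarrow> real) \<Rightarrow> bool" where
  "mercer_kernel k \<longleftrightarrow> pd_kernel k \<and> continuous_on UNIV (\<lambda>(x, z). k x z)"

definition ms_kernel :: "(real \<Rightarrow> real) \<Rightarrow> (nat \<Rightarrow> real) \<Rightarrow> (nat \<Rightarrow> 'a \<Rightarrow> real)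
    \<Rightarrow> 'a \<Rightarrow> 'a \<Rightarrow> real" where
  "ms_kernel g lam Phi x z = (\<Sum>k. g (lam k) * Phi k x * Phi k z)"

text \<open>Normalised kernel matrix (1/n) k(x_i,x_j), indices i,j < n (entries outside are irrelevant).\<close>
definition kernel_matrix :: "('a \<Rightarrow> 'a \<Rightarrow> real) \<Rightarrow> nat \<Rightarrow> (nat \<Rightarrow> 'a) \<Rightarrow> nat \<Rightarrow> nat \<Rightarrow> real" where
  "kernel_matrix k n xs i j = k (xs i) (xs j) / real n"

text \<open>lam, v form an orthonormal eigenbasis of the n x n matrix A: v i is the i-th
  eigenvector (components v i j, j < n) with eigenvalue lam i.\<close>
definition orth_eigenbasis :: "nat \<Rightarrow> (nat \<Rightarrow> nat \<Rightarrow> real) \<Rightarrow> (nat \<Rightarrow> real)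
    \<Rightarrow> (nat \<Rightarrow> nat \<Rightarrow> real) \<Rightarrow> bool" where
  "orth_eigenbasis n A lam v \<longleftrightarrow>
     (\<forall>i<n. \<forall>i'<n. (\<Sum>j<n. v i j * v i' j) = (if i = i' then 1 else 0)) \<and>
     (\<forall>i<n. \<forall>j<n. (\<Sum>l<n. A j l * v i l) = lam i * v i j)"

text \<open>V D V^T with D = diag(g(lam_i)); entry (j,l).\<close>
definition spectral_modify :: "nat \<Rightarrow> (real \<Rightarrow> real) \<Rightarrow> (nat \<Rightarrow> real)
    \<Rightarrow> (nat \<Rightarrow> nat \<Rightarrow> real) \<Rightarrow> nat \<Rightarrow> nat \<Rightarrow> real" where
  "spectral_modify n g lam v j l = (\<Sum>i<n. v i j * g (lam i) * v i l)"

definition frob_dist :: "nat \<Rightarrow> (nat \<Rightarrow> nat \<Rightarrow> real) \<Rightarrow> (nat \<Rightarrow> nat \<Rightarrow> real) \<Rightarrow> real" where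
  "frob_dist n A B = sqrt (\<Sum>i<n. \<Sum>j<n. (A i j - B i j)\<^sup>2)"

end

theory Submission
  imports Defs "Jordan_Normal_Form.Determinant"
begin

(*
  Write psi_i = (Phi_i(x_j) / sqrt n)_j and truncate both kernels after r eigenfunctions:
  K = sum_{i<r} lam_i psi_i psi_i^T + T_r and K_g = sum_{i<r} g(lam_i) psi_i psi_i^T + T_{g,r}.
  The tails T_r, T_{g,r} are kernel matrices of positive semidefinite kernels, so their Frobenius
  norms are bounded by their traces; by the strong law of large numbers these converge almost
  surely to the expected tails tau_r, tau_{g,r}, which tend to 0 as r grows by dominated
  convergence.
  If the psi_i were orthonormal, expanding K in its eigenbasis would give the classical bound
  ||V diag(g(lamhat)) V^T - sum_{i<r} g(lam_i) psi_i psi_i^T||_F <= L ||K - sum_{i<r} lam_i psi_i psi_i^T||_F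
  for L-Lipschitz g with g(0) = 0.  The Gram matrix of the psi_i tends to the identity almost
  surely, and the bound survives up to an error that vanishes as n grows.  Hence
  limsup_n ||K~_g - K_g||_F <= L tau_r + tau_{g,r} for every r.
  The bound needs lam_i >= 0, which follows from positive definiteness, and g(0) = 0, which
  follows from lam_i -> 0 and g(lam_i) -> 0.
*)

section \<open>Frobenius distance between sums of rank-one matrices\<close>

(* A family of vectors in R^n is a function x, where x a j is the j-th coordinate (j < n) of
   the a-th vector; gram n x y a b is the inner product of x a and y b, and rank_one_sum r w x
   is the matrix sum_{k<r} w_k x_k x_k^T. *)
definition gram :: "nat \<Rightarrow> (nat \<Rightarrow> nat \<Rightarrow> real) \<Rightarrow> (nat \<Rightarrow> nat \<Rightarrow> real) \<Rightarrow> nat \<Rightarrow> nat \<Rightarrow> real" where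
  "gram n x y a b = (\<Sum>j<n. x a j * y b j)"

definition orthonormal :: "nat \<Rightarrow> (nat \<Rightarrow> nat \<Rightarrow> real) \<Rightarrow> bool" where
  "orthonormal n v \<longleftrightarrow> (\<forall>a<n. \<forall>b<n. gram n v v a b = (if a = b then 1 else 0))"

definition rank_one_sum :: "nat \<Rightarrow> (nat \<Rightarrow> real) \<Rightarrow> (nat \<Rightarrow> nat \<Rightarrow> real) \<Rightarrow> nat \<Rightarrow> nat \<Rightarrow> real" where
  "rank_one_sum r w x j l = (\<Sum>k<r. w k * x k j * x k l)"

definition frob_inner :: "nat \<Rightarrow> (nat \<Rightarrow> nat \<Rightarrow> real) \<Rightarrow> (nat \<Rightarrow> nat \<Rightarrow> real) \<Rightarrow> real" where
  "frob_inner n A B = (\<Sum>j<n. \<Sum>l<n. A j l * B j l)"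

lemma spectral_modify_eq_rank_one_sum:
  "spectral_modify n g lam v = rank_one_sum n (\<lambda>i. g (lam i)) v"
  by (simp add: fun_eq_iff spectral_modify_def rank_one_sum_def mult_ac)

lemma orthonormal_transpose:
  assumes "orthonormal n v"
  shows "orthonormal n (\<lambda>j a. v a j)"
proof -
  define A where "A = mat n n (\<lambda>(a, j). v a j)"
  have A: "A \<in> carrier_mat n n" and AT: "transpose_mat A \<in> carrier_mat n n"
    unfolding A_def by simp_all
  have "A * transpose_mat A = 1\<^sub>m n"
  proof (rule eq_matI)
    fix a b assume "a < dim_row (1\<^sub>m n)" "b < dim_col (1\<^sub>m n)"
    then show "(A * transpose_mat A) $$ (a, b) = 1\<^sub>m n $$ (a, b)"
      using assms by (simp add: A_def scalar_prod_def lessThan_atLeast0 orthonormal_def gram_def)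
  qed (simp_all add: A_def)
  then have "transpose_mat A * A = 1\<^sub>m n"
    using mat_mult_left_right_inverse[OF A AT] by blast
  then have "(transpose_mat A * A) $$ (i, j) = 1\<^sub>m n $$ (i, j)" for i j
    by simp
  moreover have "(transpose_mat A * A) $$ (i, j) = gram n (\<lambda>j a. v a j) (\<lambda>j a. v a j) i j"
    if "i < n" "j < n" for i j
    using that by (simp add: A_def gram_def scalar_prod_def lessThan_atLeast0)
  ultimately show ?thesis
    by (simp add: orthonormal_def)
qed

lemma orth_eigenbasis_orthonormal: "orth_eigenbasis n A lam v \<Longrightarrow> orthonormal n v"
  by (simp add: orth_eigenbasis_def orthonormal_def gram_def)

lemma orth_eigenbasis_rank_one_sum:
  assumes eig: "orth_eigenbasis n A lam v" and "j < n" "l < n"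
  shows "A j l = rank_one_sum n lam v j l"
proof -
  have cols: "(\<Sum>a<n. v a m * v a l) = (if m = l then 1 else 0)" if "m < n" for m
    using orthonormal_transpose[OF orth_eigenbasis_orthonormal[OF eig]] that \<open>l < n\<close>
    by (simp add: orthonormal_def gram_def)
  have "A j l = (\<Sum>m<n. A j m * (if m = l then 1 else 0))"
    using \<open>l < n\<close> by (simp add: if_distrib cong: if_cong)
  also have "\<dots> = (\<Sum>m<n. A j m * (\<Sum>a<n. v a m * v a l))"
    by (intro sum.cong refl) (simp add: cols)
  also have "\<dots> = (\<Sum>m<n. \<Sum>a<n. A j m * v a m * v a l)"
    by (simp add: sum_distrib_left mult.assoc)
  also have "\<dots> = (\<Sum>a<n. (\<Sum>m<n. A j m * v a m) * v a l)"
    by (subst sum.swap) (simp add: sum_distrib_right)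
  also have "\<dots> = rank_one_sum n lam v j l"
    using eig \<open>j < n\<close> by (simp add: orth_eigenbasis_def rank_one_sum_def)
  finally show ?thesis .
qed

lemma sum_swap_outer2:
  "(\<Sum>j\<in>J. \<Sum>l\<in>L. \<Sum>a\<in>A. \<Sum>b\<in>B. f j l a b) = (\<Sum>a\<in>A. \<Sum>b\<in>B. \<Sum>j\<in>J. \<Sum>l\<in>L. f j l a b)"
proof -
  have "(\<Sum>j\<in>J. \<Sum>l\<in>L. \<Sum>a\<in>A. \<Sum>b\<in>B. f j l a b) = (\<Sum>j\<in>J. \<Sum>a\<in>A. \<Sum>b\<in>B. \<Sum>l\<in>L. f j l a b)"
    by (intro sum.cong refl) (subst sum.swap, intro sum.cong refl, rule sum.swap)
  also have "\<dots> = (\<Sum>a\<in>A. \<Sum>b\<in>B. \<Sum>j\<in>J. \<Sum>l\<in>L. f j l a b)"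
    by (subst sum.swap, intro sum.cong refl, rule sum.swap)
  finally show ?thesis .
qed

lemma frob_inner_rank_one_sum:
  "frob_inner n (rank_one_sum p \<alpha> x) (rank_one_sum q \<beta> y) =
     (\<Sum>a<p. \<Sum>b<q. \<alpha> a * \<beta> b * (gram n x y a b)\<^sup>2)"
proof -
  have "frob_inner n (rank_one_sum p \<alpha> x) (rank_one_sum q \<beta> y) =
     (\<Sum>j<n. \<Sum>l<n. \<Sum>a<p. \<Sum>b<q. (\<alpha> a * \<beta> b) * ((x a j * y b j) * (x a l * y b l)))"
    unfolding frob_inner_def rank_one_sum_def sum_product by (intro sum.cong refl) (simp only: mult_ac)
  also have "\<dots> = (\<Sum>a<p. \<Sum>b<q. (\<alpha> a * \<beta> b) * (\<Sum>j<n. \<Sum>l<n. (x a j * y b j) * (x a l * y b l)))"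
    unfolding sum_distrib_left by (rule sum_swap_outer2)
  also have "\<dots> = (\<Sum>a<p. \<Sum>b<q. \<alpha> a * \<beta> b * (gram n x y a b)\<^sup>2)"
    by (simp add: gram_def power2_eq_square sum_product)
  finally show ?thesis .
qed

lemma frob_inner_self_rank_one_sum:
  assumes "orthonormal n v"
  shows "frob_inner n (rank_one_sum n h v) (rank_one_sum n h v) = (\<Sum>a<n. (h a)\<^sup>2)"
proof -
  have "(\<Sum>b<n. h a * h b * (gram n v v a b)\<^sup>2) = (\<Sum>b<n. if a = b then h a * h b else 0)"
    if "a < n" for a
    by (intro sum.cong refl) (use assms that in \<open>auto simp: orthonormal_def\<close>)
  then show ?thesis
    by (simp add: frob_inner_rank_one_sum power2_eq_square)
qed

lemma frob_dist_sq:
  "(frob_dist n A B)\<^sup>2 = frob_inner n A A - 2 * frob_inner n A B + frob_inner n B B"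
proof -
  have "(frob_dist n A B)\<^sup>2 = (\<Sum>j<n. \<Sum>l<n. (A j l - B j l)\<^sup>2)"
    by (simp add: frob_dist_def sum_nonneg)
  also have "\<dots> = (\<Sum>j<n. \<Sum>l<n. A j l * A j l - 2 * (A j l * B j l) + B j l * B j l)"
    by (intro sum.cong refl) (simp add: power2_eq_square algebra_simps)
  also have "\<dots> = frob_inner n A A - (\<Sum>j<n. \<Sum>l<n. 2 * (A j l * B j l)) + frob_inner n B B"
    unfolding frob_inner_def by (simp only: sum.distrib sum_subtractf)
  finally show ?thesis
    by (simp only: frob_inner_def sum_distrib_left)
qed

lemma frob_dist_triangle: "frob_dist n A C \<le> frob_dist n A B + frob_dist n B C"
proof -
  have L2: "frob_dist n A B = L2_set (\<lambda>(j, l). A j l - B j l) ({..<n} \<times> {..<n})" for A B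
    by (simp add: frob_dist_def L2_set_def sum.cartesian_product case_prod_beta)
  have "frob_dist n A C = L2_set (\<lambda>p. (case p of (j, l) \<Rightarrow> A j l - B j l)
      + (case p of (j, l) \<Rightarrow> B j l - C j l)) ({..<n} \<times> {..<n})"
    by (simp add: L2 split_def)
  also have "\<dots> \<le> frob_dist n A B + frob_dist n B C"
    unfolding L2 by (rule L2_set_triangle_ineq)
  finally show ?thesis .
qed

lemma gram_parseval:
  assumes "orthonormal n (\<lambda>j a. v a j)"
  shows "(\<Sum>a<n. gram n v x a k * gram n v y a m) = gram n x y k m"
proof -
  have "(\<Sum>a<n. gram n v x a k * gram n v y a m) =
      (\<Sum>a<n. \<Sum>i<n. \<Sum>j<n. (v a i * v a j) * (x k i * y m j))"
    unfolding gram_def sum_product by (intro sum.cong refl) (simp only: mult_ac)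
  also have "\<dots> = (\<Sum>i<n. \<Sum>a<n. \<Sum>j<n. (v a i * v a j) * (x k i * y m j))"
    by (rule sum.swap)
  also have "\<dots> = (\<Sum>i<n. \<Sum>j<n. \<Sum>a<n. (v a i * v a j) * (x k i * y m j))"
    by (rule sum.cong[OF refl], rule sum.swap)
  also have "\<dots> = (\<Sum>i<n. \<Sum>j<n. (\<Sum>a<n. v a i * v a j) * (x k i * y m j))"
    by (simp add: sum_distrib_right)
  also have "\<dots> = (\<Sum>i<n. \<Sum>j<n. if i = j then x k i * y m j else 0)"
    by (intro sum.cong refl) (use assms in \<open>auto simp: orthonormal_def gram_def\<close>)
  also have "\<dots> = gram n x y k m"
    by (simp add: gram_def)
  finally show ?thesis .
qed

definition gram_dev :: "nat \<Rightarrow> (nat \<Rightarrow> nat \<Rightarrow> real) \<Rightarrow> real" where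
  "gram_dev r G = (\<Sum>k<r. \<Sum>m<r. \<bar>G k m - (if k = m then 1 else 0)\<bar>)"

definition gram_remainder :: "nat \<Rightarrow> (nat \<Rightarrow> real) \<Rightarrow> (nat \<Rightarrow> nat \<Rightarrow> real) \<Rightarrow> real" where
  "gram_remainder r w G = (\<Sum>k<r. \<Sum>m<r. w k * w m * (G k m)\<^sup>2) - (\<Sum>k<r. (w k)\<^sup>2 * G k k)"

lemma gram_dev_nonneg: "0 \<le> gram_dev r G"
  by (simp add: gram_dev_def sum_nonneg)

lemma sum_sq_lincomb_eq_gram:
  "(\<Sum>j<n. (\<Sum>k<r. c k * \<psi> k j)\<^sup>2) = (\<Sum>k<r. \<Sum>m<r. c k * c m * gram n \<psi> \<psi> k m)"
proof -
  have "(\<Sum>j<n. (\<Sum>k<r. c k * \<psi> k j)\<^sup>2) = (\<Sum>j<n. \<Sum>k<r. \<Sum>m<r. (c k * c m) * (\<psi> k j * \<psi> m j))"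
    unfolding power2_eq_square sum_product by (simp only: mult_ac)
  also have "\<dots> = (\<Sum>k<r. \<Sum>j<n. \<Sum>m<r. (c k * c m) * (\<psi> k j * \<psi> m j))"
    by (rule sum.swap)
  also have "\<dots> = (\<Sum>k<r. \<Sum>m<r. \<Sum>j<n. (c k * c m) * (\<psi> k j * \<psi> m j))"
    by (rule sum.cong[OF refl], rule sum.swap)
  finally show ?thesis
    by (simp add: gram_def sum_distrib_left)
qed

lemma quadratic_form_le_gram_dev:
  "(\<Sum>k<r. \<Sum>m<r. c k * c m * G k m) \<le> (\<Sum>k<r. (c k)\<^sup>2) * (1 + gram_dev r G)"
proof -
  define p where "p = (\<Sum>k<r. (c k)\<^sup>2)"
  let ?d = "\<lambda>k m. G k m - (if k = m then 1 else 0)"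
  have "\<bar>c k\<bar> \<le> sqrt p" if "k < r" for k
  proof (rule real_le_rsqrt)
    show "\<bar>c k\<bar>\<^sup>2 \<le> p"
      unfolding p_def power2_abs using that by (intro member_le_sum) auto
  qed
  then have ck: "\<bar>c k * c m\<bar> \<le> p" if "k < r" "m < r" for k m
    using that mult_mono[of "\<bar>c k\<bar>" "sqrt p" "\<bar>c m\<bar>" "sqrt p"]
    by (simp add: abs_mult p_def sum_nonneg)
  have diag: "(\<Sum>m<r. c k * c m * (if k = m then 1 else 0)) = (c k)\<^sup>2" if "k < r" for k
  proof -
    have "(\<Sum>m<r. c k * c m * (if k = m then 1 else 0)) = (\<Sum>m<r. if k = m then c k * c m else 0)"
      by (intro sum.cong refl) simp
    then show ?thesis
      using that by (simp add: power2_eq_square)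
  qed
  have "(\<Sum>k<r. \<Sum>m<r. c k * c m * G k m) = p + (\<Sum>k<r. \<Sum>m<r. c k * c m * ?d k m)"
    by (simp add: p_def diag right_diff_distrib sum_subtractf)
  also have "\<dots> \<le> p + (\<Sum>k<r. \<Sum>m<r. p * \<bar>?d k m\<bar>)"
  proof (intro add_left_mono sum_mono)
    fix k m assume "k \<in> {..<r}" "m \<in> {..<r}"
    have "c k * c m * ?d k m \<le> \<bar>c k * c m\<bar> * \<bar>?d k m\<bar>"
      by (metis abs_ge_self abs_mult)
    also have "\<dots> \<le> p * \<bar>?d k m\<bar>"
      using ck \<open>k \<in> {..<r}\<close> \<open>m \<in> {..<r}\<close> by (simp add: mult_right_mono)
    finally show "c k * c m * ?d k m \<le> p * \<bar>?d k m\<bar>" .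
  qed
  also have "\<dots> = p * (1 + gram_dev r G)"
    by (simp add: gram_dev_def sum_distrib_left algebra_simps)
  finally show ?thesis
    by (simp add: p_def)
qed

lemma bessel_almost_orthonormal:
  fixes y :: "nat \<Rightarrow> real" and \<psi> :: "nat \<Rightarrow> nat \<Rightarrow> real"
  assumes unit: "(\<Sum>j<n. (y j)\<^sup>2) = 1"
  shows "(\<Sum>k<r. (\<Sum>j<n. y j * \<psi> k j)\<^sup>2) \<le> 1 + gram_dev r (gram n \<psi> \<psi>)"
proof -
  define c where "c k = (\<Sum>j<n. y j * \<psi> k j)" for k
  define p where "p = (\<Sum>k<r. (c k)\<^sup>2)"
  have "(c k)\<^sup>2 = (\<Sum>j<n. c k * (y j * \<psi> k j))" for k
    by (simp add: power2_eq_square c_def sum_distrib_left)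
  then have "p = (\<Sum>k<r. \<Sum>j<n. c k * (y j * \<psi> k j))"
    by (simp add: p_def)
  also have "\<dots> = (\<Sum>j<n. y j * (\<Sum>k<r. c k * \<psi> k j))"
    by (subst sum.swap) (simp add: sum_distrib_left mult_ac)
  finally have "p\<^sup>2 \<le> (\<Sum>j<n. (y j)\<^sup>2) * (\<Sum>j<n. (\<Sum>k<r. c k * \<psi> k j)\<^sup>2)"
    by (simp only: Cauchy_Schwarz_ineq_sum)
  also have "\<dots> \<le> p * (1 + gram_dev r (gram n \<psi> \<psi>))"
    unfolding unit sum_sq_lincomb_eq_gram p_def by (simp add: quadratic_form_le_gram_dev)
  finally have "p * p \<le> p * (1 + gram_dev r (gram n \<psi> \<psi>))"
    by (simp add: power2_eq_square)
  then have "p \<le> 1 + gram_dev r (gram n \<psi> \<psi>)"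
    using gram_dev_nonneg[of r "gram n \<psi> \<psi>"] by (cases "p = 0") (auto simp: mult_le_cancel_left p_def sum_nonneg)
  then show ?thesis
    by (simp add: p_def c_def)
qed

(* For orthonormal psi the last two terms vanish, and the identity becomes the classical proof
   that Lipschitz functions of symmetric matrices are Lipschitz in the Frobenius norm. *)
lemma frob_dist_sq_rank_one_sums:
  assumes v: "orthonormal n v"
  shows "(frob_dist n (rank_one_sum n h v) (rank_one_sum r w \<psi>))\<^sup>2 =
      (\<Sum>a<n. \<Sum>k<r. (h a - w k)\<^sup>2 * (gram n v \<psi> a k)\<^sup>2)
      + (\<Sum>a<n. (h a)\<^sup>2 * (1 - (\<Sum>k<r. (gram n v \<psi> a k)\<^sup>2)))
      + gram_remainder r w (gram n \<psi> \<psi>)"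
proof -
  let ?c = "gram n v \<psi>" and ?G = "gram n \<psi> \<psi>"
  have col: "(\<Sum>a<n. (?c a k)\<^sup>2) = ?G k k" for k
    using gram_parseval[OF orthonormal_transpose[OF v]] by (simp add: power2_eq_square)
  have "(\<Sum>a<n. \<Sum>k<r. (h a - w k)\<^sup>2 * (?c a k)\<^sup>2) =
      (\<Sum>a<n. (h a)\<^sup>2 * (\<Sum>k<r. (?c a k)\<^sup>2)) - 2 * (\<Sum>a<n. \<Sum>k<r. h a * w k * (?c a k)\<^sup>2)
      + (\<Sum>k<r. (w k)\<^sup>2 * (\<Sum>a<n. (?c a k)\<^sup>2))"
    by (simp add: power2_diff algebra_simps sum.distrib sum_subtractf sum_distrib_left
        sum.swap[of _ "{..<r}" "{..<n}"])
  moreover have "(frob_dist n (rank_one_sum n h v) (rank_one_sum r w \<psi>))\<^sup>2 =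
      (\<Sum>a<n. (h a)\<^sup>2) - 2 * (\<Sum>a<n. \<Sum>k<r. h a * w k * (?c a k)\<^sup>2)
      + (\<Sum>k<r. \<Sum>m<r. w k * w m * (?G k m)\<^sup>2)"
    unfolding frob_dist_sq frob_inner_self_rank_one_sum[OF v] unfolding frob_inner_rank_one_sum ..
  ultimately show ?thesis
    by (simp add: col gram_remainder_def algebra_simps sum_subtractf)
qed

lemma lipschitz_sq_diff_le:
  assumes "L-lipschitz_on UNIV g"
  shows "(g a - g b)\<^sup>2 \<le> L\<^sup>2 * (a - b)\<^sup>2"
proof -
  have "\<bar>g a - g b\<bar> \<le> \<bar>L * (a - b)\<bar>"
    using lipschitz_onD[OF assms, of a b] lipschitz_on_nonneg[OF assms]
    by (simp add: dist_real_def abs_mult)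
  then show ?thesis
    by (simp add: abs_le_square_iff power_mult_distrib)
qed

lemma frob_dist_sq_lipschitz:
  assumes v: "orthonormal n v" and lip: "L-lipschitz_on UNIV g" and g0: "g 0 = 0"
  shows "(frob_dist n (rank_one_sum n (\<lambda>a. g (h a)) v) (rank_one_sum r (\<lambda>k. g (w k)) \<psi>))\<^sup>2
      \<le> L\<^sup>2 * (frob_dist n (rank_one_sum n h v) (rank_one_sum r w \<psi>))\<^sup>2
        + L\<^sup>2 * gram_dev r (gram n \<psi> \<psi>) * (\<Sum>a<n. (h a)\<^sup>2)
        + (gram_remainder r (\<lambda>k. g (w k)) (gram n \<psi> \<psi>) - L\<^sup>2 * gram_remainder r w (gram n \<psi> \<psi>))"
proof -
  let ?c = "gram n v \<psi>" and ?\<epsilon> = "gram_dev r (gram n \<psi> \<psi>)"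
  define p where "p a = (\<Sum>k<r. (?c a k)\<^sup>2)" for a
  have "(\<Sum>j<n. (v a j)\<^sup>2) = 1" if "a < n" for a
    using v that by (simp add: orthonormal_def gram_def power2_eq_square)
  then have p: "p a - 1 \<le> ?\<epsilon>" if "a < n" for a
    using bessel_almost_orthonormal[where y="v a" and \<psi>=\<psi> and r=r and n=n] that by (simp add: p_def gram_def)
  have "(\<Sum>a<n. \<Sum>k<r. (g (h a) - g (w k))\<^sup>2 * (?c a k)\<^sup>2)
      \<le> L\<^sup>2 * (\<Sum>a<n. \<Sum>k<r. (h a - w k)\<^sup>2 * (?c a k)\<^sup>2)"
    unfolding sum_distrib_left mult.assoc[symmetric]
    by (intro sum_mono mult_right_mono lipschitz_sq_diff_le[OF lip]) simp
  moreover have "(\<Sum>a<n. (g (h a))\<^sup>2 * (1 - p a))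
      \<le> L\<^sup>2 * (\<Sum>a<n. (h a)\<^sup>2 * (1 - p a)) + L\<^sup>2 * ?\<epsilon> * (\<Sum>a<n. (h a)\<^sup>2)"
  proof -
    have "(g (h a))\<^sup>2 * (1 - p a) \<le> L\<^sup>2 * ((h a)\<^sup>2 * (1 - p a)) + L\<^sup>2 * ?\<epsilon> * (h a)\<^sup>2"
      if "a < n" for a
    proof -
      have D: "0 \<le> L\<^sup>2 * (h a)\<^sup>2 - (g (h a))\<^sup>2"
        using lipschitz_sq_diff_le[OF lip, of "h a" 0] g0 by simp
      have "(L\<^sup>2 * (h a)\<^sup>2 - (g (h a))\<^sup>2) * (p a - 1) \<le> (L\<^sup>2 * (h a)\<^sup>2 - (g (h a))\<^sup>2) * ?\<epsilon>"
        using D p[OF that] by (rule mult_left_mono[rotated])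
      also have "\<dots> \<le> L\<^sup>2 * (h a)\<^sup>2 * ?\<epsilon>"
        using gram_dev_nonneg by (simp add: mult_right_mono)
      finally show ?thesis
        by (simp add: algebra_simps)
    qed
    then have "(\<Sum>a<n. (g (h a))\<^sup>2 * (1 - p a))
        \<le> (\<Sum>a<n. L\<^sup>2 * ((h a)\<^sup>2 * (1 - p a)) + L\<^sup>2 * ?\<epsilon> * (h a)\<^sup>2)"
      by (intro sum_mono) simp
    then show ?thesis
      by (simp add: sum.distrib sum_distrib_left)
  qed
  ultimately show ?thesis
    unfolding frob_dist_sq_rank_one_sums[OF v] p_def by (simp add: algebra_simps)
qed

section \<open>Kernel matrices of truncated kernels\<close>

definition sample_features :: "nat \<Rightarrow> (nat \<Rightarrow> 'a \<Rightarrow> real) \<Rightarrow> (nat \<Rightarrow> 'a) \<Rightarrow> nat \<Rightarrow> nat \<Rightarrow> real" where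
  "sample_features n Phi x i j = Phi i (x j) / sqrt (real n)"

lemma gram_sample_features:
  "gram n (sample_features n Phi x) (sample_features n Phi x) k m = (\<Sum>j<n. Phi k (x j) * Phi m (x j)) / real n"
  by (cases "n = 0") (simp_all add: gram_def sample_features_def sum_divide_distrib)

lemma kernel_matrix_truncate:
  assumes "\<And>y z. k y z = (\<Sum>i<r. c i * Phi i y * Phi i z) + t y z"
  shows "kernel_matrix k n x j l = rank_one_sum r c (sample_features n Phi x) j l + kernel_matrix t n x j l"
  by (simp add: assms kernel_matrix_def rank_one_sum_def sample_features_def sum_divide_distrib
      add_divide_distrib)

lemma frob_dist_cong:
  assumes "\<And>j l. j < n \<Longrightarrow> l < n \<Longrightarrow> A j l = A' j l" "\<And>j l. j < n \<Longrightarrow> l < n \<Longrightarrow> B j l = B' j l"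
  shows "frob_dist n A B = frob_dist n A' B'"
  using assms by (simp add: frob_dist_def)

lemma frob_dist_nonneg: "0 \<le> frob_dist n A B"
  by (simp add: frob_dist_def sum_nonneg)

lemma frob_dist_commute: "frob_dist n A B = frob_dist n B A"
  by (simp add: frob_dist_def power2_commute)

lemma frob_dist_add_right: "frob_dist n A (\<lambda>j l. A j l + T j l) = frob_dist n T (\<lambda>_ _. 0)"
  by (simp add: frob_dist_def power2_commute)

lemma frob_norm_kernel_matrix_le_trace:
  assumes diag: "\<And>y. 0 \<le> t y y" and CS: "\<And>y z. (t y z)\<^sup>2 \<le> t y y * t z z"
  shows "frob_dist n (kernel_matrix t n x) (\<lambda>_ _. 0) \<le> (\<Sum>j<n. t (x j) (x j)) / real n"
  unfolding frob_dist_def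
proof (rule real_le_lsqrt)
  have "(\<Sum>j<n. \<Sum>l<n. (kernel_matrix t n x j l - 0)\<^sup>2) = (\<Sum>j<n. \<Sum>l<n. (t (x j) (x l))\<^sup>2) / (real n)\<^sup>2"
    by (simp add: kernel_matrix_def power_divide sum_divide_distrib)
  also have "\<dots> \<le> (\<Sum>j<n. \<Sum>l<n. t (x j) (x j) * t (x l) (x l)) / (real n)\<^sup>2"
    by (intro divide_right_mono sum_mono CS) simp
  also have "\<dots> = ((\<Sum>j<n. t (x j) (x j)) / real n)\<^sup>2"
    by (simp add: power_divide power2_eq_square sum_product)
  finally show "(\<Sum>j<n. \<Sum>l<n. (kernel_matrix t n x j l - 0)\<^sup>2) \<le> ((\<Sum>j<n. t (x j) (x j)) / real n)\<^sup>2" .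
qed (simp add: diag sum_nonneg)

lemma frob_dist_kernel_matrix_truncation:
  assumes split: "\<And>y z. k y z = (\<Sum>i<r. c i * Phi i y * Phi i z) + t y z"
    and diag: "\<And>y. 0 \<le> t y y" and CS: "\<And>y z. (t y z)\<^sup>2 \<le> t y y * t z z"
  shows "frob_dist n (rank_one_sum r c (sample_features n Phi x)) (kernel_matrix k n x)
    \<le> (\<Sum>j<n. t (x j) (x j)) / real n"
proof -
  have "kernel_matrix k n x = (\<lambda>j l. rank_one_sum r c (sample_features n Phi x) j l + kernel_matrix t n x j l)"
    using kernel_matrix_truncate[where k=k and Phi=Phi and t=t, OF split] by blast
  then show ?thesis
    using frob_norm_kernel_matrix_le_trace[where t=t, OF diag CS] by (simp add: frob_dist_add_right)
qed

lemma sum_sq_eigenvalues_le: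
  assumes eig: "orth_eigenbasis n (kernel_matrix k n x) lh v" and k_bound: "\<And>y z. \<bar>k y z\<bar> \<le> C"
  shows "(\<Sum>a<n. (lh a)\<^sup>2) \<le> C\<^sup>2"
proof -
  have "(\<Sum>a<n. (lh a)\<^sup>2) = frob_inner n (kernel_matrix k n x) (kernel_matrix k n x)"
    using orth_eigenbasis_rank_one_sum[OF eig]
    by (simp add: frob_inner_self_rank_one_sum[OF orth_eigenbasis_orthonormal[OF eig], symmetric]
        frob_inner_def)
  also have "\<dots> \<le> (\<Sum>j<n. \<Sum>l<n. (C / real n)\<^sup>2)"
  proof -
    have "(k y z)\<^sup>2 \<le> C\<^sup>2" for y z
      using power_mono[OF k_bound abs_ge_zero, of y z 2] by simp
    then show ?thesis
      unfolding frob_inner_def kernel_matrix_def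
      by (intro sum_mono) (simp add: power2_eq_square[symmetric] power_divide divide_right_mono)
  qed
  also have "\<dots> \<le> C\<^sup>2"
    by (cases "n = 0") (simp_all add: power_divide power2_eq_square)
  finally show ?thesis .
qed

lemma frob_dist_modified_kernel_matrix_le:
  fixes x :: "nat \<Rightarrow> 'a" and lam :: "nat \<Rightarrow> real" and Phi :: "nat \<Rightarrow> 'a \<Rightarrow> real"
  assumes eig: "orth_eigenbasis n (kernel_matrix k n x) lh v"
    and k_split: "\<And>y z. k y z = (\<Sum>i<r. lam i * Phi i y * Phi i z) + tk y z"
    and kg_split: "\<And>y z. kg y z = (\<Sum>i<r. g (lam i) * Phi i y * Phi i z) + tg y z"
    and tk_diag: "\<And>y. 0 \<le> tk y y" and tk_CS: "\<And>y z. (tk y z)\<^sup>2 \<le> tk y y * tk z z"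
    and tg_diag: "\<And>y. 0 \<le> tg y y" and tg_CS: "\<And>y z. (tg y z)\<^sup>2 \<le> tg y y * tg z z"
    and k_bound: "\<And>y z. \<bar>k y z\<bar> \<le> C"
    and lip: "L-lipschitz_on UNIV g" and g0: "g 0 = 0"
  defines "G \<equiv> gram n (sample_features n Phi x) (sample_features n Phi x)"
  shows "frob_dist n (spectral_modify n g lh v) (kernel_matrix kg n x) \<le>
    sqrt (L\<^sup>2 * ((\<Sum>j<n. tk (x j) (x j)) / real n)\<^sup>2 + L\<^sup>2 * gram_dev r G * C\<^sup>2
      + (gram_remainder r (\<lambda>i. g (lam i)) G - L\<^sup>2 * gram_remainder r lam G))
    + (\<Sum>j<n. tg (x j) (x j)) / real n"
proof -
  let ?\<psi> = "sample_features n Phi x" and ?R = "rank_one_sum n lh v"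
  let ?a = "(\<Sum>j<n. tk (x j) (x j)) / real n"
  let ?\<Delta> = "gram_remainder r (\<lambda>i. g (lam i)) G - L\<^sup>2 * gram_remainder r lam G"
  have "frob_dist n ?R (rank_one_sum r lam ?\<psi>) = frob_dist n (rank_one_sum r lam ?\<psi>) (kernel_matrix k n x)"
    using orth_eigenbasis_rank_one_sum[OF eig] by (subst frob_dist_commute) (rule frob_dist_cong, simp_all)
  also have "\<dots> \<le> ?a"
    by (rule frob_dist_kernel_matrix_truncation[OF k_split tk_diag tk_CS])
  finally have "(frob_dist n ?R (rank_one_sum r lam ?\<psi>))\<^sup>2 \<le> ?a\<^sup>2"
    by (rule power_mono[OF _ frob_dist_nonneg])
  then have "L\<^sup>2 * (frob_dist n ?R (rank_one_sum r lam ?\<psi>))\<^sup>2 + L\<^sup>2 * gram_dev r G * (\<Sum>a<n. (lh a)\<^sup>2) + ?\<Delta>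
      \<le> L\<^sup>2 * ?a\<^sup>2 + L\<^sup>2 * gram_dev r G * C\<^sup>2 + ?\<Delta>"
    by (intro add_mono mult_left_mono sum_sq_eigenvalues_le[OF eig k_bound] order_refl
        mult_nonneg_nonneg gram_dev_nonneg) simp_all
  then have "frob_dist n (spectral_modify n g lh v) (rank_one_sum r (\<lambda>i. g (lam i)) ?\<psi>)
      \<le> sqrt (L\<^sup>2 * ?a\<^sup>2 + L\<^sup>2 * gram_dev r G * C\<^sup>2 + ?\<Delta>)"
    unfolding spectral_modify_eq_rank_one_sum G_def
    by (intro real_le_rsqrt order_trans[OF frob_dist_sq_lipschitz[OF orth_eigenbasis_orthonormal[OF eig] lip g0]])
  moreover have "frob_dist n (rank_one_sum r (\<lambda>i. g (lam i)) ?\<psi>) (kernel_matrix kg n x)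
      \<le> (\<Sum>j<n. tg (x j) (x j)) / real n"
    by (rule frob_dist_kernel_matrix_truncation[OF kg_split tg_diag tg_CS])
  ultimately show ?thesis
    using frob_dist_triangle[of n "spectral_modify n g lh v" "kernel_matrix kg n x"
        "rank_one_sum r (\<lambda>i. g (lam i)) ?\<psi>"] by linarith
qed

lemma tendsto_gram_dev:
  assumes "\<And>k m. (\<lambda>n. G n k m) \<longlonglongrightarrow> (if k = m then 1 else 0)"
  shows "(\<lambda>n. gram_dev r (G n)) \<longlonglongrightarrow> 0"
proof -
  have "(\<lambda>n. gram_dev r (G n)) \<longlonglongrightarrow> gram_dev r (\<lambda>k m. if k = m then 1 else 0)"
    unfolding gram_dev_def by (intro tendsto_intros assms)
  then show ?thesis
    by (simp add: gram_dev_def)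
qed

lemma tendsto_gram_remainder:
  assumes "\<And>k m. (\<lambda>n. G n k m) \<longlonglongrightarrow> (if k = m then 1 else 0)"
  shows "(\<lambda>n. gram_remainder r w (G n)) \<longlonglongrightarrow> 0"
proof -
  have "(\<lambda>n. gram_remainder r w (G n)) \<longlonglongrightarrow> gram_remainder r w (\<lambda>k m. if k = m then 1 else 0)"
    unfolding gram_remainder_def by (intro tendsto_intros assms)
  moreover have "(\<Sum>m<r. w k * w m * (if k = m then 1 else 0)\<^sup>2) = (w k)\<^sup>2" if "k < r" for k
  proof -
    have "(\<Sum>m<r. w k * w m * (if k = m then 1 else 0)\<^sup>2) = (\<Sum>m<r. if k = m then w k * w m else 0)"
      by (intro sum.cong refl) simp
    then show ?thesis
      using that by (simp add: power2_eq_square)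
  qed
  ultimately show ?thesis
    by (simp add: gram_remainder_def)
qed

lemma LIMSEQ_zero_by_approximation:
  fixes F :: "nat \<Rightarrow> real" and U :: "nat \<Rightarrow> nat \<Rightarrow> real"
  assumes F_nonneg: "\<And>n. 0 \<le> F n" and F_le: "\<And>r. eventually (\<lambda>n. F n \<le> U r n) sequentially"
    and U: "\<And>r. U r \<longlonglongrightarrow> u r" and u: "u \<longlonglongrightarrow> 0"
  shows "F \<longlonglongrightarrow> 0"
proof (rule order_tendstoI)
  fix e :: real assume "0 < e"
  then obtain r where "u r < e"
    using order_tendstoD(2)[OF u] eventually_sequentially by (metis order_refl)
  then have "eventually (\<lambda>n. U r n < e) sequentially"
    by (rule order_tendstoD(2)[OF U])
  with F_le[of r] show "eventually (\<lambda>n. F n < e) sequentially"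
    by eventually_elim simp
next
  fix a :: real assume "a < 0"
  then show "eventually (\<lambda>n. a < F n) sequentially"
    using F_nonneg by (intro always_eventually allI) (rule less_le_trans)
qed

lemma frob_dist_modified_kernel_matrix_tendsto_zero:
  fixes x :: "nat \<Rightarrow> 'a" and lh :: "nat \<Rightarrow> nat \<Rightarrow> real" and v :: "nat \<Rightarrow> nat \<Rightarrow> nat \<Rightarrow> real"
    and lam :: "nat \<Rightarrow> real" and Phi :: "nat \<Rightarrow> 'a \<Rightarrow> real" and tk tg :: "nat \<Rightarrow> 'a \<Rightarrow> 'a \<Rightarrow> real"
  assumes eig: "\<And>n. orth_eigenbasis n (kernel_matrix k n x) (lh n) (v n)"
    and k_split: "\<And>r y z. k y z = (\<Sum>i<r. lam i * Phi i y * Phi i z) + tk r y z"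
    and kg_split: "\<And>r y z. kg y z = (\<Sum>i<r. g (lam i) * Phi i y * Phi i z) + tg r y z"
    and tk_diag: "\<And>r y. 0 \<le> tk r y y" and tk_CS: "\<And>r y z. (tk r y z)\<^sup>2 \<le> tk r y y * tk r z z"
    and tg_diag: "\<And>r y. 0 \<le> tg r y y" and tg_CS: "\<And>r y z. (tg r y z)\<^sup>2 \<le> tg r y y * tg r z z"
    and k_bound: "\<And>y z. \<bar>k y z\<bar> \<le> C"
    and lip: "L-lipschitz_on UNIV g" and g0: "g 0 = 0"
    and gram_lim: "\<And>i m. (\<lambda>n. (\<Sum>j<n. Phi i (x j) * Phi m (x j)) / real n) \<longlonglongrightarrow> (if i = m then 1 else 0)"
    and tk_lim: "\<And>r. (\<lambda>n. (\<Sum>j<n. tk r (x j) (x j)) / real n) \<longlonglongrightarrow> \<tau> r" and \<tau>: "\<tau> \<longlonglongrightarrow> 0"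
    and tg_lim: "\<And>r. (\<lambda>n. (\<Sum>j<n. tg r (x j) (x j)) / real n) \<longlonglongrightarrow> \<tau>g r" and \<tau>g: "\<tau>g \<longlonglongrightarrow> 0"
  shows "(\<lambda>n. frob_dist n (spectral_modify n g (lh n) (v n)) (kernel_matrix kg n x)) \<longlonglongrightarrow> 0"
proof (rule LIMSEQ_zero_by_approximation)
  define G where "G n = gram n (sample_features n Phi x) (sample_features n Phi x)" for n
  have G: "(\<lambda>n. G n i m) \<longlonglongrightarrow> (if i = m then 1 else 0)" for i m
    unfolding G_def gram_sample_features by (rule gram_lim)
  define U where "U r n = sqrt (L\<^sup>2 * ((\<Sum>j<n. tk r (x j) (x j)) / real n)\<^sup>2 + L\<^sup>2 * gram_dev r (G n) * C\<^sup>2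
      + (gram_remainder r (\<lambda>i. g (lam i)) (G n) - L\<^sup>2 * gram_remainder r lam (G n)))
    + (\<Sum>j<n. tg r (x j) (x j)) / real n" for r n
  show "eventually (\<lambda>n. frob_dist n (spectral_modify n g (lh n) (v n)) (kernel_matrix kg n x) \<le> U r n)
      sequentially" for r
    unfolding U_def G_def
    by (intro always_eventually allI frob_dist_modified_kernel_matrix_le[OF eig k_split kg_split
          tk_diag tk_CS tg_diag tg_CS k_bound lip g0])
  have "U r \<longlonglongrightarrow> sqrt (L\<^sup>2 * (\<tau> r)\<^sup>2 + L\<^sup>2 * 0 * C\<^sup>2 + (0 - L\<^sup>2 * 0)) + \<tau>g r" for r
    unfolding U_def
    by (intro tendsto_intros tk_lim tg_lim tendsto_gram_dev tendsto_gram_remainder G)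
  then show "U r \<longlonglongrightarrow> \<bar>L * \<tau> r\<bar> + \<tau>g r" for r
    by (simp add: real_sqrt_mult abs_mult)
  show "(\<lambda>r. \<bar>L * \<tau> r\<bar> + \<tau>g r) \<longlonglongrightarrow> 0"
    using tendsto_add[OF tendsto_rabs_zero[OF tendsto_mult_right_zero[OF \<tau>]] \<tau>g]
    by (simp add: mult.commute)
qed (rule frob_dist_nonneg)

section \<open>Averages over an i.i.d. sample\<close>

lemma hoeffding_iid_average:
  fixes P :: "'w measure" and \<mu> :: "'a measure" and Xs :: "nat \<Rightarrow> 'w \<Rightarrow> 'a"
  assumes P: "prob_space P" and Xs_meas: "\<And>i. Xs i \<in> measurable P \<mu>"
    and indep: "prob_space.indep_vars P (\<lambda>_. \<mu>) Xs UNIV" and distr: "\<And>i. distr P \<mu> (Xs i) = \<mu>"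
    and f: "f \<in> borel_measurable \<mu>" and bound: "\<And>x. \<bar>f x\<bar> \<le> B"
    and "0 < B" and "0 < e"
  shows "measure P {\<omega>\<in>space P. e \<le> \<bar>(\<Sum>i<n. f (Xs i \<omega>)) / real n - (\<integral>x. f x \<partial>\<mu>)\<bar>}
    \<le> 2 * exp (- (e\<^sup>2 / (2 * B\<^sup>2))) ^ n" (is "measure P ?A \<le> _")
proof -
  interpret prob_space P by (rule P)
  show ?thesis
  proof (cases "n = 0")
    case True
    have "prob ?A \<le> 1"
      by (rule prob_le_1)
    also have "1 \<le> 2 * exp (- (e\<^sup>2 / (2 * B\<^sup>2))) ^ n"
      using True by simp
    finally show ?thesis .
  next
    case False
    define Y where "Y = (\<lambda>i \<omega>. f (Xs i \<omega>))"
    interpret Hoeffding_ineq_iid P "{..<n}" Y "Y 0" "- B" B "expectation (Y 0)"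
    proof unfold_locales
      show "indep_vars (\<lambda>_. borel) Y {..<n}"
        unfolding Y_def using f by (intro indep_vars_compose2[OF indep_vars_subset[OF indep]]) auto
      show "distr P borel (Y i) = distr P borel (Y 0)" for i
        using distr_distr[OF f Xs_meas, of i] distr_distr[OF f Xs_meas, of 0] distr
        by (simp add: Y_def comp_def)
      show "Y 0 \<in> borel_measurable P"
        unfolding Y_def using measurable_comp[OF Xs_meas f] by (simp add: comp_def)
      show "AE \<omega> in P. Y 0 \<omega> \<in> {- B..B}"
      proof (rule AE_I2)
        fix \<omega>
        show "Y 0 \<omega> \<in> {- B..B}"
          using bound[of "Xs 0 \<omega>"] by (auto simp: Y_def abs_le_iff)
      qed
    qed simp
    have "expectation (Y 0) = (\<integral>x. f x \<partial>\<mu>)"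
      using integral_distr[OF Xs_meas f, of 0] distr[of 0] by (simp add: Y_def)
    moreover have "- B < B" "{..<n} \<noteq> {}"
      using False \<open>0 < B\<close> by auto
    ultimately have "prob ?A \<le> 2 * exp (-2 * real n * e\<^sup>2 / (B - - B)\<^sup>2)"
      using Hoeffding_ineq_abs_ge'[of e] \<open>0 < e\<close> by (simp add: Y_def)
    also have "-2 * real n * e\<^sup>2 / (B - - B)\<^sup>2 = real n * (- (e\<^sup>2 / (2 * B\<^sup>2)))"
      using \<open>0 < B\<close> by (simp add: field_simps power2_eq_square)
    finally show ?thesis
      by (simp only: exp_of_nat_mult)
  qed
qed

lemma AE_eventually_average_close:
  fixes P :: "'w measure" and \<mu> :: "'a measure" and Xs :: "nat \<Rightarrow> 'w \<Rightarrow> 'a"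
  assumes P: "prob_space P" and Xs_meas: "\<And>i. Xs i \<in> measurable P \<mu>"
    and indep: "prob_space.indep_vars P (\<lambda>_. \<mu>) Xs UNIV" and distr: "\<And>i. distr P \<mu> (Xs i) = \<mu>"
    and f: "f \<in> borel_measurable \<mu>" and bound: "\<And>x. \<bar>f x\<bar> \<le> B"
    and "0 < B" and "0 < e"
  shows "AE \<omega> in P. eventually (\<lambda>n. \<bar>(\<Sum>i<n. f (Xs i \<omega>)) / real n - (\<integral>x. f x \<partial>\<mu>)\<bar> < e) sequentially"
proof -
  interpret prob_space P by (rule P)
  define A where "A n = {\<omega>\<in>space P. e \<le> \<bar>(\<Sum>i<n. f (Xs i \<omega>)) / real n - (\<integral>x. f x \<partial>\<mu>)\<bar>}" for n
  have [measurable]: "(\<lambda>\<omega>. f (Xs i \<omega>)) \<in> borel_measurable P" for i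
    using measurable_comp[OF Xs_meas f] by (simp add: comp_def)
  have "summable (\<lambda>n. 2 * exp (- (e\<^sup>2 / (2 * B\<^sup>2))) ^ n)"
    using assms by (simp add: summable_geometric_iff)
  then have "summable (\<lambda>n. measure P (A n))"
    unfolding A_def by (rule summable_comparison_test'[where N=0])
      (simp add: hoeffding_iid_average[OF P Xs_meas indep distr f bound \<open>0 < B\<close> \<open>0 < e\<close>])
  then have "AE \<omega> in P. eventually (\<lambda>n. \<omega> \<in> space P - A n) sequentially"
    by (intro borel_cantelli_AE1) (simp_all add: A_def emeasure_eq_measure)
  then show ?thesis
    by (elim AE_mp) (auto intro!: AE_I2 elim: eventually_mono simp: A_def)
qed

lemma strong_law_bounded:
  fixes P :: "'w measure" and \<mu> :: "'a measure" and Xs :: "nat \<Rightarrow> 'w \<Rightarrow> 'a"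
  assumes P: "prob_space P" and Xs_meas: "\<And>i. Xs i \<in> measurable P \<mu>"
    and indep: "prob_space.indep_vars P (\<lambda>_. \<mu>) Xs UNIV" and distr: "\<And>i. distr P \<mu> (Xs i) = \<mu>"
    and f: "f \<in> borel_measurable \<mu>" and bound: "\<And>x. \<bar>f x\<bar> \<le> B"
  shows "AE \<omega> in P. (\<lambda>n. (\<Sum>i<n. f (Xs i \<omega>)) / real n) \<longlonglongrightarrow> (\<integral>x. f x \<partial>\<mu>)"
proof -
  let ?avg = "\<lambda>\<omega> n. (\<Sum>i<n. f (Xs i \<omega>)) / real n"
  have B': "\<bar>f x\<bar> \<le> \<bar>B\<bar> + 1" "0 < \<bar>B\<bar> + 1" for x
    using bound[of x] abs_ge_zero[of B] by linarith+
  have "AE \<omega> in P. eventually (\<lambda>n. \<bar>?avg \<omega> n - (\<integral>x. f x \<partial>\<mu>)\<bar> < 1 / real (Suc m)) sequentially"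
    for m
    by (intro AE_eventually_average_close[OF P Xs_meas indep distr f B']) simp
  then have "AE \<omega> in P. \<forall>m.
      eventually (\<lambda>n. \<bar>?avg \<omega> n - (\<integral>x. f x \<partial>\<mu>)\<bar> < 1 / real (Suc m)) sequentially"
    by (simp add: AE_all_countable)
  then show ?thesis
  proof (rule eventually_mono)
    fix \<omega> assume close: "\<forall>m. eventually (\<lambda>n. \<bar>?avg \<omega> n - (\<integral>x. f x \<partial>\<mu>)\<bar> < 1 / real (Suc m)) sequentially"
    show "?avg \<omega> \<longlonglongrightarrow> (\<integral>x. f x \<partial>\<mu>)"
      unfolding tendsto_iff
    proof (intro allI impI)
      fix e :: real assume "0 < e"
      then obtain m :: nat where m: "1 / real (Suc m) < e"
        by (rule nat_approx_posE)
      show "eventually (\<lambda>n. dist (?avg \<omega> n) (\<integral>x. f x \<partial>\<mu>) < e) sequentially"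
        using close[rule_format, of m] by (rule eventually_mono) (use m in \<open>simp add: dist_real_def\<close>)
    qed
  qed
qed

lemma (in prob_space) indep_var_of_indep_vars:
  assumes indep: "indep_vars (\<lambda>_. N) Xs UNIV" and "j \<noteq> l"
  shows "indep_var N (Xs j) N (Xs l)"
proof -
  let ?\<sigma> = "\<lambda>i. sigma_sets (space M) {Xs i -` A \<inter> space M |A. A \<in> sets N}"
  have rv: "random_variable N (Xs i)" for i
    using indep unfolding indep_vars_def by auto
  have IS: "indep_sets ?\<sigma> UNIV"
    using indep unfolding indep_vars_def by auto
  have "indep_set (?\<sigma> j) (?\<sigma> l)"
    unfolding indep_sets2_eq
  proof (intro conjI ballI)
    show "?\<sigma> j \<subseteq> events" "?\<sigma> l \<subseteq> events"
      using IS unfolding indep_sets_def by auto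
    fix a b assume "a \<in> ?\<sigma> j" "b \<in> ?\<sigma> l"
    then have "prob (\<Inter>i\<in>{j, l}. if i = j then a else b) = (\<Prod>i\<in>{j, l}. prob (if i = j then a else b))"
      using \<open>j \<noteq> l\<close> by (intro indep_setsD[OF IS]) auto
    then show "prob (a \<inter> b) = prob a * prob b"
      using \<open>j \<noteq> l\<close> by (simp add: Int_commute)
  qed
  then show ?thesis
    unfolding indep_var_eq using rv by blast
qed

lemma integral_iid_pair:
  fixes P :: "'w measure" and \<mu> :: "'a measure" and F :: "'a \<times> 'a \<Rightarrow> real"
  assumes P: "prob_space P" and indep: "prob_space.indep_vars P (\<lambda>_. \<mu>) Xs UNIV"
    and distr: "\<And>i. distr P \<mu> (Xs i) = \<mu>" and "j \<noteq> l"
    and F: "F \<in> borel_measurable (\<mu> \<Otimes>\<^sub>M \<mu>)"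
  shows "(\<integral>\<omega>. F (Xs j \<omega>, Xs l \<omega>) \<partial>P) = (\<integral>p. F p \<partial>(\<mu> \<Otimes>\<^sub>M \<mu>))"
proof -
  interpret prob_space P by (rule P)
  have "indep_var \<mu> (Xs j) \<mu> (Xs l)"
    using indep \<open>j \<noteq> l\<close> by (rule indep_var_of_indep_vars)
  then have rv: "random_variable \<mu> (Xs j)" "random_variable \<mu> (Xs l)"
    and joint: "distr P \<mu> (Xs j) \<Otimes>\<^sub>M distr P \<mu> (Xs l) = distr P (\<mu> \<Otimes>\<^sub>M \<mu>) (\<lambda>\<omega>. (Xs j \<omega>, Xs l \<omega>))"
    unfolding indep_var_distribution_eq by auto
  have "(\<integral>\<omega>. F (Xs j \<omega>, Xs l \<omega>) \<partial>P) = (\<integral>p. F p \<partial>distr P (\<mu> \<Otimes>\<^sub>M \<mu>) (\<lambda>\<omega>. (Xs j \<omega>, Xs l \<omega>)))"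
    using integral_distr[OF measurable_Pair[OF rv] F] by simp
  then show ?thesis
    using joint distr by simp
qed

lemma AE_empirical_gram_tendsto:
  fixes P :: "'w measure" and \<mu> :: "'a measure" and Xs :: "nat \<Rightarrow> 'w \<Rightarrow> 'a"
    and Phi :: "nat \<Rightarrow> 'a \<Rightarrow> real"
  assumes P: "prob_space P" and Xs_meas: "\<And>i. Xs i \<in> measurable P \<mu>"
    and indep: "prob_space.indep_vars P (\<lambda>_. \<mu>) Xs UNIV" and distr: "\<And>i. distr P \<mu> (Xs i) = \<mu>"
    and Phi_meas: "\<And>i. Phi i \<in> borel_measurable \<mu>" and Phi_bound: "\<And>i x. \<bar>Phi i x\<bar> \<le> M"
    and orthonormal: "\<And>i m. (\<integral>x. Phi i x * Phi m x \<partial>\<mu>) = (if i = m then 1 else 0)"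
  shows "AE \<omega> in P. \<forall>i m. (\<lambda>n. (\<Sum>j<n. Phi i (Xs j \<omega>) * Phi m (Xs j \<omega>)) / real n)
    \<longlonglongrightarrow> (if i = m then 1 else 0)"
  unfolding AE_all_countable
proof (intro allI)
  fix i m
  have "\<bar>Phi i x * Phi m x\<bar> \<le> M * M" for x
    unfolding abs_mult using Phi_bound[of i x] Phi_bound[of m x]
    by (intro mult_mono) (auto intro: order_trans[OF abs_ge_zero])
  then show "AE \<omega> in P. (\<lambda>n. (\<Sum>j<n. Phi i (Xs j \<omega>) * Phi m (Xs j \<omega>)) / real n)
      \<longlonglongrightarrow> (if i = m then 1 else 0)"
    using strong_law_bounded[OF P Xs_meas indep distr, of "\<lambda>x. Phi i x * Phi m x" "M * M"] Phi_meas
    by (simp add: orthonormal)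
qed

section \<open>Bounded and positive definite kernels\<close>

lemma continuous_kernel_bounded:
  fixes k :: "'a::metric_space \<Rightarrow> 'a \<Rightarrow> real"
  assumes "compact (UNIV :: 'a set)" and "continuous_on UNIV (\<lambda>(x, z). k x z)"
  obtains C where "\<And>x z. \<bar>k x z\<bar> \<le> C"
proof -
  have "compact (UNIV :: ('a \<times> 'a) set)"
    using compact_Times[OF assms(1) assms(1)] by simp
  then have "bounded (range (\<lambda>(x, z). k x z))"
    by (intro compact_imp_bounded compact_continuous_image assms(2))
  then obtain C where "\<forall>y\<in>range (\<lambda>(x, z). k x z). norm y \<le> C"
    unfolding bounded_iff by blast
  then show ?thesis
    using that by fastforce
qed

lemma nonneg_of_nat_quadratic_lower_bound:
  fixes I B :: real
  assumes bound: "\<And>m::nat. 0 \<le> real m * (real m - 1) * I + real m * B"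
  shows "0 \<le> I"
proof (rule ccontr)
  assume "\<not> 0 \<le> I"
  then have "I < 0"
    by simp
  then obtain m :: nat where m: "\<bar>B\<bar> / (- I) + 2 < real m"
    using reals_Archimedean2 by blast
  have "0 \<le> \<bar>B\<bar> / (- I)"
    using \<open>I < 0\<close> by (intro divide_nonneg_pos) auto
  with m have "1 < real m"
    by linarith
  have "\<bar>B\<bar> / (- I) < real m - 2"
    using m by linarith
  then have "\<bar>B\<bar> < (real m - 2) * (- I)"
    using \<open>I < 0\<close> by (subst (asm) pos_divide_less_eq) auto
  then have "B < (real m - 1) * (- I)"
    using \<open>I < 0\<close> by (simp add: algebra_simps)
  with \<open>1 < real m\<close> have "real m * B < real m * ((real m - 1) * (- I))"
    by (intro mult_strict_left_mono) auto
  then show False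
    using bound[of m] by (simp add: algebra_simps)
qed

lemma pd_kernel_integral_nonneg:
  fixes P :: "'w measure" and \<mu> :: "'a measure" and Xs :: "nat \<Rightarrow> 'w \<Rightarrow> 'a" and k :: "'a \<Rightarrow> 'a \<Rightarrow> real"
  assumes P: "prob_space P" and Xs_meas: "\<And>i. Xs i \<in> measurable P \<mu>"
    and indep: "prob_space.indep_vars P (\<lambda>_. \<mu>) Xs UNIV" and distr: "\<And>i. distr P \<mu> (Xs i) = \<mu>"
    and pd: "pd_kernel k"
    and F_meas: "(\<lambda>(x, z). f x * f z * k x z) \<in> borel_measurable (\<mu> \<Otimes>\<^sub>M \<mu>)"
    and F_bound: "\<And>x z. \<bar>f x * f z * k x z\<bar> \<le> B"
  shows "0 \<le> (\<integral>(x, z). f x * f z * k x z \<partial>(\<mu> \<Otimes>\<^sub>M \<mu>))"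
proof -
  interpret prob_space P by (rule P)
  define F where "F = (\<lambda>(x, z). f x * f z * k x z)"
  define I where "I = (\<integral>p. F p \<partial>(\<mu> \<Otimes>\<^sub>M \<mu>))"
  define Y where "Y = (\<lambda>j l \<omega>. F (Xs j \<omega>, Xs l \<omega>))"
  have F_meas': "F \<in> borel_measurable (\<mu> \<Otimes>\<^sub>M \<mu>)"
    unfolding F_def by (rule F_meas)
  have Y_meas: "Y j l \<in> borel_measurable P" for j l
    unfolding Y_def by (rule measurable_compose[OF measurable_Pair[OF Xs_meas Xs_meas] F_meas'])
  have Y_int: "integrable P (Y j l)" for j l
    by (rule integrable_const_bound[where B=B, OF _ Y_meas]) (simp add: Y_def F_def F_bound)
  have Y_le: "(\<integral>\<omega>. Y j l \<omega> \<partial>P) \<le> I + (if j = l then B - I else 0)" for j l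
  proof (cases "j = l")
    case True
    have "(\<integral>\<omega>. Y j l \<omega> \<partial>P) \<le> B"
      by (intro integral_le_const Y_int AE_I2) (simp add: Y_def F_def abs_le_D1[OF F_bound])
    then show ?thesis
      using True by simp
  next
    case False
    then show ?thesis
      unfolding Y_def I_def using integral_iid_pair[OF P indep distr False F_meas'] by simp
  qed
  have "0 \<le> real m * (real m - 1) * I + real m * B" for m
    \<comment> \<open>the Gram quadratic form of the first m samples is nonnegative, and its expectation
      has m (m - 1) off-diagonal terms equal to I\<close>
  proof -
    have "0 \<le> (\<integral>\<omega>. (\<Sum>j<m. \<Sum>l<m. Y j l \<omega>) \<partial>P)"
    proof (rule Bochner_Integration.integral_nonneg)
      fix \<omega>
      show "0 \<le> (\<Sum>j<m. \<Sum>l<m. Y j l \<omega>)"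
        using pd[unfolded pd_kernel_def, THEN conjunct2, rule_format,
            where m=m and xs="\<lambda>j. Xs j \<omega>" and c="\<lambda>j. f (Xs j \<omega>)"]
        by (simp add: Y_def F_def mult_ac)
    qed
    also have "\<dots> = (\<Sum>j<m. \<Sum>l<m. (\<integral>\<omega>. Y j l \<omega> \<partial>P))"
      using Y_int by simp
    also have "\<dots> \<le> (\<Sum>j<m. \<Sum>l<m. I + (if j = l then B - I else 0))"
      by (intro sum_mono Y_le)
    also have "\<dots> = real m * (real m - 1) * I + real m * B"
      by (simp add: sum.distrib algebra_simps)
    finally show ?thesis .
  qed
  then show ?thesis
    unfolding I_def F_def by (rule nonneg_of_nat_quadratic_lower_bound)
qed

lemma measurable_kernel_of_expansion:
  fixes k :: "'a \<Rightarrow> 'a \<Rightarrow> real"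
  assumes Phi_meas: "\<And>i. Phi i \<in> borel_measurable \<mu>"
    and expansion: "\<And>x z. (\<lambda>i. lam i * Phi i x * Phi i z) sums k x z"
  shows "(\<lambda>(x, z). k x z) \<in> borel_measurable (\<mu> \<Otimes>\<^sub>M \<mu>)"
proof (rule borel_measurable_LIMSEQ_real)
  note [measurable] = Phi_meas
  show "(\<lambda>N. \<Sum>i<N. lam i * Phi i (fst p) * Phi i (snd p)) \<longlonglongrightarrow> (case p of (x, z) \<Rightarrow> k x z)" for p
    using expansion[of "fst p" "snd p"] by (simp add: sums_def split_beta)
  show "(\<lambda>p. \<Sum>i<N. lam i * Phi i (fst p) * Phi i (snd p)) \<in> borel_measurable (\<mu> \<Otimes>\<^sub>M \<mu>)" for N
    by measurable
qed

lemma eigenvalue_nonneg_of_pd_kernel: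
  fixes P :: "'w measure" and \<mu> :: "'a measure" and Xs :: "nat \<Rightarrow> 'w \<Rightarrow> 'a" and k :: "'a \<Rightarrow> 'a \<Rightarrow> real"
  assumes P: "prob_space P" and Xs_meas: "\<And>i. Xs i \<in> measurable P \<mu>"
    and indep: "prob_space.indep_vars P (\<lambda>_. \<mu>) Xs UNIV" and distr: "\<And>i. distr P \<mu> (Xs i) = \<mu>"
    and prob_mu: "prob_space \<mu>" and pd: "pd_kernel k"
    and k_meas: "(\<lambda>(x, z). k x z) \<in> borel_measurable (\<mu> \<Otimes>\<^sub>M \<mu>)" and k_bound: "\<And>x z. \<bar>k x z\<bar> \<le> C"
    and f_meas: "f \<in> borel_measurable \<mu>" and f_bound: "\<And>x. \<bar>f x\<bar> \<le> M"
    and normalized: "(\<integral>x. f x * f x \<partial>\<mu>) = 1"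
    and eigen: "AE x in \<mu>. (\<integral>z. k x z * f z \<partial>\<mu>) = lam * f x"
  shows "0 \<le> lam"
proof -
  interpret pair_prob_space \<mu> \<mu>
    using prob_mu by (simp add: pair_prob_space_def pair_sigma_finite_def prob_space_imp_sigma_finite)
  note [measurable] = f_meas k_meas
  let ?F = "\<lambda>(x, z). f x * f z * k x z"
  have F_meas: "?F \<in> borel_measurable (\<mu> \<Otimes>\<^sub>M \<mu>)"
    by measurable
  have F_bound: "\<bar>f x * f z * k x z\<bar> \<le> M * M * C" for x z
    unfolding abs_mult using f_bound[of x] f_bound[of z] k_bound[of x z]
    by (intro mult_mono) (auto intro: order_trans[OF abs_ge_zero])
  have "integrable (\<mu> \<Otimes>\<^sub>M \<mu>) ?F"
    by (rule integrable_const_bound[where B="M * M * C"]) (simp_all add: F_bound F_meas split_beta)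
  then have "(\<integral>p. ?F p \<partial>(\<mu> \<Otimes>\<^sub>M \<mu>)) = (\<integral>x. (\<integral>z. ?F (x, z) \<partial>\<mu>) \<partial>\<mu>)"
    by (rule integral_fst'[symmetric])
  also have "\<dots> = (\<integral>x. lam * (f x * f x) \<partial>\<mu>)"
  proof (rule integral_cong_AE)
    show "AE x in \<mu>. (\<integral>z. ?F (x, z) \<partial>\<mu>) = lam * (f x * f x)"
      using eigen by (rule eventually_mono) (simp add: mult_ac)
  qed measurable
  also have "\<dots> = lam"
    by (simp add: normalized)
  finally have "lam = (\<integral>p. ?F p \<partial>(\<mu> \<Otimes>\<^sub>M \<mu>))" ..
  also have "\<dots> \<ge> 0"
    by (rule pd_kernel_integral_nonneg[OF P Xs_meas indep distr pd F_meas F_bound])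
  finally show ?thesis .
qed

section \<open>Kernels given by nonnegative eigen-expansions\<close>

lemma suminf_weighted_Cauchy_Schwarz:
  fixes d p q :: "nat \<Rightarrow> real"
  assumes d: "\<And>i. 0 \<le> d i"
    and pp: "summable (\<lambda>i. d i * p i * p i)" and qq: "summable (\<lambda>i. d i * q i * q i)"
    and pq: "summable (\<lambda>i. d i * p i * q i)"
  shows "(\<Sum>i. d i * p i * q i)\<^sup>2 \<le> (\<Sum>i. d i * p i * p i) * (\<Sum>i. d i * q i * q i)"
proof (rule LIMSEQ_le)
  show "(\<lambda>N. (\<Sum>i<N. d i * p i * q i)\<^sup>2) \<longlonglongrightarrow> (\<Sum>i. d i * p i * q i)\<^sup>2"
    by (intro tendsto_intros summable_LIMSEQ pq)
  show "(\<lambda>N. (\<Sum>i<N. d i * p i * p i) * (\<Sum>i<N. d i * q i * q i))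
      \<longlonglongrightarrow> (\<Sum>i. d i * p i * p i) * (\<Sum>i. d i * q i * q i)"
    by (intro tendsto_intros summable_LIMSEQ pp qq)
  have "(\<Sum>i<N. d i * p i * q i)\<^sup>2 \<le> (\<Sum>i<N. d i * p i * p i) * (\<Sum>i<N. d i * q i * q i)" for N
    using Cauchy_Schwarz_ineq_sum[of "\<lambda>i. sqrt (d i) * p i" "\<lambda>i. sqrt (d i) * q i" "{..<N}"] d
    by (simp add: power2_eq_square mult_ac)
  then show "\<exists>N. \<forall>n\<ge>N. (\<Sum>i<n. d i * p i * q i)\<^sup>2 \<le> (\<Sum>i<n. d i * p i * p i) * (\<Sum>i<n. d i * q i * q i)"
    by blast
qed

definition series_tail :: "(nat \<Rightarrow> real) \<Rightarrow> (nat \<Rightarrow> 'a \<Rightarrow> real) \<Rightarrow> nat \<Rightarrow> 'a \<Rightarrow> 'a \<Rightarrow> real" where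
  "series_tail c Phi r x z = (\<Sum>i. c (i + r) * Phi (i + r) x * Phi (i + r) z)"

locale nonneg_series_kernel =
  fixes c :: "nat \<Rightarrow> real" and Phi :: "nat \<Rightarrow> 'a \<Rightarrow> real"
  assumes coeff_nonneg: "\<And>i. 0 \<le> c i"
    and summable_kernel: "\<And>x z. summable (\<lambda>i. c i * Phi i x * Phi i z)"
begin

lemma summable_tail: "summable (\<lambda>i. c (i + r) * Phi (i + r) x * Phi (i + r) z)"
  using summable_ignore_initial_segment[OF summable_kernel[of x z], of r] by simp

lemma suminf_eq_partial_plus_tail:
  "(\<Sum>i. c i * Phi i x * Phi i z) = (\<Sum>i<r. c i * Phi i x * Phi i z) + series_tail c Phi r x z"
  unfolding series_tail_def using suminf_split_initial_segment[OF summable_kernel[of x z], of r] by simp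

lemma diag_term_nonneg: "0 \<le> c i * Phi i x * Phi i x"
  using coeff_nonneg[of i] by (simp add: mult.assoc)

lemma series_tail_diag_nonneg: "0 \<le> series_tail c Phi r x x"
  unfolding series_tail_def by (rule suminf_nonneg[OF summable_tail diag_term_nonneg])

lemma series_tail_diag_le: "series_tail c Phi r x x \<le> (\<Sum>i. c i * Phi i x * Phi i x)"
  using suminf_eq_partial_plus_tail[of x x r] sum_nonneg[OF diag_term_nonneg] by simp

lemma diag_term_le: "c i * Phi i x * Phi i x \<le> (\<Sum>i. c i * Phi i x * Phi i x)"
  using sum_le_suminf[OF summable_kernel[of x x], of "{i}"] diag_term_nonneg by simp

lemma series_tail_Cauchy_Schwarz:
  "(series_tail c Phi r x z)\<^sup>2 \<le> series_tail c Phi r x x * series_tail c Phi r z z"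
  unfolding series_tail_def
  by (rule suminf_weighted_Cauchy_Schwarz) (simp_all add: coeff_nonneg summable_tail)

lemma series_tail_tendsto_zero: "(\<lambda>r. series_tail c Phi r x z) \<longlonglongrightarrow> 0"
  unfolding series_tail_def by (rule suminf_exist_split2[OF summable_kernel])

lemma series_tail_measurable:
  assumes "\<And>i. Phi i \<in> borel_measurable \<mu>"
  shows "(\<lambda>x. series_tail c Phi r x x) \<in> borel_measurable \<mu>"
proof (rule borel_measurable_LIMSEQ_real)
  note [measurable] = assms
  show "(\<lambda>N. \<Sum>i<N. c (i + r) * Phi (i + r) x * Phi (i + r) x) \<longlonglongrightarrow> series_tail c Phi r x x" for x
    unfolding series_tail_def by (rule summable_LIMSEQ[OF summable_tail])
  show "(\<lambda>x. \<Sum>i<N. c (i + r) * Phi (i + r) x * Phi (i + r) x) \<in> borel_measurable \<mu>" for N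
    by measurable
qed

lemma integral_series_tail_tendsto_zero:
  assumes "prob_space \<mu>" and meas: "\<And>i. Phi i \<in> borel_measurable \<mu>"
    and bound: "\<And>x. (\<Sum>i. c i * Phi i x * Phi i x) \<le> C"
  shows "(\<lambda>r. \<integral>x. series_tail c Phi r x x \<partial>\<mu>) \<longlonglongrightarrow> 0"
proof -
  interpret prob_space \<mu> by fact
  have "(\<lambda>r. \<integral>x. series_tail c Phi r x x \<partial>\<mu>) \<longlonglongrightarrow> (\<integral>x. 0 \<partial>\<mu>)"
  proof (rule integral_dominated_convergence[where w="\<lambda>_. C"])
    show "AE x in \<mu>. (\<lambda>r. series_tail c Phi r x x) \<longlonglongrightarrow> 0"
      by (intro AE_I2 series_tail_tendsto_zero)
    show "AE x in \<mu>. norm (series_tail c Phi r x x) \<le> C" for r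
      using series_tail_diag_nonneg series_tail_diag_le bound by (intro AE_I2) (metis order_trans real_norm_def abs_of_nonneg)
  qed (simp_all add: series_tail_measurable[OF meas])
  then show ?thesis
    by simp
qed

lemma coeff_tendsto_zero:
  assumes "prob_space \<mu>" and meas: "\<And>i. Phi i \<in> borel_measurable \<mu>"
    and bound: "\<And>x. (\<Sum>i. c i * Phi i x * Phi i x) \<le> C"
    and normalized: "\<And>i. (\<integral>x. Phi i x * Phi i x \<partial>\<mu>) = 1"
  shows "c \<longlonglongrightarrow> 0"
proof -
  interpret prob_space \<mu> by fact
  note [measurable] = meas
  have "(\<lambda>i. \<integral>x. c i * Phi i x * Phi i x \<partial>\<mu>) \<longlonglongrightarrow> (\<integral>x. 0 \<partial>\<mu>)"
  proof (rule integral_dominated_convergence[where w="\<lambda>_. C"])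
    show "AE x in \<mu>. (\<lambda>i. c i * Phi i x * Phi i x) \<longlonglongrightarrow> 0"
      by (intro AE_I2 summable_LIMSEQ_zero summable_kernel)
    show "AE x in \<mu>. norm (c i * Phi i x * Phi i x) \<le> C" for i
      using diag_term_nonneg diag_term_le bound by (intro AE_I2) (metis order_trans real_norm_def abs_of_nonneg)
  qed simp_all
  moreover have "(\<integral>x. c i * Phi i x * Phi i x \<partial>\<mu>) = c i" for i
    using normalized[of i] by (simp add: mult.assoc)
  ultimately show ?thesis
    by simp
qed

lemma AE_empirical_tail_tendsto:
  fixes P :: "'w measure" and \<mu> :: "'a measure" and Xs :: "nat \<Rightarrow> 'w \<Rightarrow> 'a"
  assumes P: "prob_space P" and Xs_meas: "\<And>i. Xs i \<in> measurable P \<mu>"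
    and indep: "prob_space.indep_vars P (\<lambda>_. \<mu>) Xs UNIV" and distr: "\<And>i. distr P \<mu> (Xs i) = \<mu>"
    and Phi_meas: "\<And>i. Phi i \<in> borel_measurable \<mu>"
    and bound: "\<And>x. (\<Sum>i. c i * Phi i x * Phi i x) \<le> C"
  shows "AE \<omega> in P. \<forall>r. (\<lambda>n. (\<Sum>j<n. series_tail c Phi r (Xs j \<omega>) (Xs j \<omega>)) / real n)
    \<longlonglongrightarrow> (\<integral>x. series_tail c Phi r x x \<partial>\<mu>)"
  unfolding AE_all_countable
proof
  fix r
  have "\<bar>series_tail c Phi r x x\<bar> \<le> C" for x
    using series_tail_diag_nonneg[of r x] series_tail_diag_le[of r x] bound[of x] by simp
  then show "AE \<omega> in P. (\<lambda>n. (\<Sum>j<n. series_tail c Phi r (Xs j \<omega>) (Xs j \<omega>)) / real n)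
      \<longlonglongrightarrow> (\<integral>x. series_tail c Phi r x x \<partial>\<mu>)"
    by (rule strong_law_bounded[OF P Xs_meas indep distr series_tail_measurable[OF Phi_meas]])
qed

lemma modifier_vanishes_at_zero:
  assumes "nonneg_series_kernel (\<lambda>i. g (c i)) Phi" and "isCont g 0"
    and prob: "prob_space \<mu>" and meas: "\<And>i. Phi i \<in> borel_measurable \<mu>"
    and normalized: "\<And>i. (\<integral>x. Phi i x * Phi i x \<partial>\<mu>) = 1"
    and bound: "\<And>x. (\<Sum>i. c i * Phi i x * Phi i x) \<le> C"
    and g_bound: "\<And>x. (\<Sum>i. g (c i) * Phi i x * Phi i x) \<le> Cg"
  shows "g 0 = 0"
proof -
  have "(\<lambda>i. g (c i)) \<longlonglongrightarrow> g 0"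
    using \<open>isCont g 0\<close> coeff_tendsto_zero[OF prob meas bound normalized] by (rule isCont_tendsto_compose)
  moreover have "(\<lambda>i. g (c i)) \<longlonglongrightarrow> 0"
    by (rule nonneg_series_kernel.coeff_tendsto_zero[OF assms(1) prob meas g_bound normalized])
  ultimately show ?thesis
    by (rule LIMSEQ_unique)
qed

end

theorem theorem1:
  fixes \<mu> :: "'a::metric_space measure"
    and k :: "'a \<Rightarrow> 'a \<Rightarrow> real"
    and lam :: "nat \<Rightarrow> real"
    and Phi :: "nat \<Rightarrow> 'a \<Rightarrow> real"
    and g :: "real \<Rightarrow> real"
    and L M :: real
    and P :: "'w measure"
    and Xs :: "nat \<Rightarrow> 'w \<Rightarrow> 'a"
    and lamhat :: "nat \<Rightarrow> 'w \<Rightarrow> nat \<Rightarrow> real"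
    and V :: "nat \<Rightarrow> 'w \<Rightarrow> nat \<Rightarrow> nat \<Rightarrow> real"
  assumes compact_X: "compact (UNIV :: 'a set)"
    and borel_mu: "sets \<mu> = sets borel"
    and prob_mu: "prob_space \<mu>"
    and mercer: "mercer_kernel k"
    and Phi_meas: "\<And>i. Phi i \<in> borel_measurable \<mu>"
    and Phi_orthonormal: "\<And>i j. (LINT x|\<mu>. Phi i x * Phi j x) = (if i = j then 1 else 0)"
    and Phi_eigen: "\<And>i. AE x in \<mu>. (LINT z|\<mu>. k x z * Phi i z) = lam i * Phi i x"
    and expansion: "\<And>x z. (\<lambda>i. lam i * Phi i x * Phi i z) sums k x z"
    and g_nonneg: "\<And>t. 0 \<le> g t"
    and g_lipschitz: "L-lipschitz_on UNIV g"
    and kg_summable: "\<And>x z. summable (\<lambda>i. g (lam i) * Phi i x * Phi i z)"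
    and kg_mercer: "mercer_kernel (ms_kernel g lam Phi)"
    and Phi_bounded: "\<And>i x. \<bar>Phi i x\<bar> \<le> M"
    and P_prob: "prob_space P"
    and Xs_meas: "\<And>i. Xs i \<in> measurable P \<mu>"
    and Xs_indep: "prob_space.indep_vars P (\<lambda>_. \<mu>) Xs UNIV"
    and Xs_distr: "\<And>i. distr P \<mu> (Xs i) = \<mu>"
    and eigdec: "\<And>n \<omega>. \<omega> \<in> space P \<Longrightarrow>
        orth_eigenbasis n (kernel_matrix k n (\<lambda>i. Xs i \<omega>)) (lamhat n \<omega>) (V n \<omega>)"
  shows "AE \<omega> in P. (\<lambda>n. frob_dist n
            (spectral_modify n g (lamhat n \<omega>) (V n \<omega>))
            (kernel_matrix (ms_kernel g lam Phi) n (\<lambda>i. Xs i \<omega>))) \<longlonglongrightarrow> 0"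
proof -
  let ?kg = "ms_kernel g lam Phi"
  obtain C where k_bound: "\<And>x z. \<bar>k x z\<bar> \<le> C"
    using continuous_kernel_bounded[OF compact_X] mercer unfolding mercer_kernel_def by blast
  obtain Cg where kg_bound: "\<And>x z. \<bar>?kg x z\<bar> \<le> Cg"
    using continuous_kernel_bounded[OF compact_X] kg_mercer unfolding mercer_kernel_def by blast
  have k_sum: "k x z = (\<Sum>i. lam i * Phi i x * Phi i z)" for x z
    using expansion[of x z] by (simp add: sums_iff)
  have kg_sum: "?kg x z = (\<Sum>i. g (lam i) * Phi i x * Phi i z)" for x z
    by (simp add: ms_kernel_def)
  have normalized: "(\<integral>x. Phi i x * Phi i x \<partial>\<mu>) = 1" for i
    using Phi_orthonormal[of i i] by simp
  have "0 \<le> lam i" for i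
    using mercer unfolding mercer_kernel_def
    by (intro eigenvalue_nonneg_of_pd_kernel[OF P_prob Xs_meas Xs_indep Xs_distr prob_mu _
          measurable_kernel_of_expansion[OF Phi_meas expansion] k_bound Phi_meas Phi_bounded
          normalized Phi_eigen]) auto
  then interpret K: nonneg_series_kernel lam Phi
    using expansion by unfold_locales (auto intro: sums_summable)
  interpret Kg: nonneg_series_kernel "\<lambda>i. g (lam i)" Phi
    using g_nonneg kg_summable by unfold_locales
  have k_diag: "(\<Sum>i. lam i * Phi i x * Phi i x) \<le> C"
    and kg_diag: "(\<Sum>i. g (lam i) * Phi i x * Phi i x) \<le> Cg" for x
    using k_bound[of x x] kg_bound[of x x] by (simp_all add: k_sum kg_sum)
  have g0: "g 0 = 0"
    using lipschitz_on_continuous_on[OF g_lipschitz]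
    by (intro K.modifier_vanishes_at_zero[OF Kg.nonneg_series_kernel_axioms _ prob_mu Phi_meas
          normalized k_diag kg_diag]) (simp add: continuous_on_eq_continuous_at)
  have "AE \<omega> in P. \<omega> \<in> space P"
    by (rule AE_space)
  with AE_empirical_gram_tendsto[OF P_prob Xs_meas Xs_indep Xs_distr Phi_meas Phi_bounded Phi_orthonormal]
    K.AE_empirical_tail_tendsto[OF P_prob Xs_meas Xs_indep Xs_distr Phi_meas k_diag]
    Kg.AE_empirical_tail_tendsto[OF P_prob Xs_meas Xs_indep Xs_distr Phi_meas kg_diag]
  show ?thesis
  proof eventually_elim
    case (elim \<omega>)
    show ?case
    proof (rule frob_dist_modified_kernel_matrix_tendsto_zero[where lam=lam and Phi=Phi
          and tk="series_tail lam Phi" and tg="series_tail (\<lambda>i. g (lam i)) Phi"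
          and \<tau>="\<lambda>r. \<integral>x. series_tail lam Phi r x x \<partial>\<mu>"
          and \<tau>g="\<lambda>r. \<integral>x. series_tail (\<lambda>i. g (lam i)) Phi r x x \<partial>\<mu>"])
      show "k y z = (\<Sum>i<r. lam i * Phi i y * Phi i z) + series_tail lam Phi r y z" for r y z
        unfolding k_sum by (rule K.suminf_eq_partial_plus_tail)
      show "?kg y z = (\<Sum>i<r. g (lam i) * Phi i y * Phi i z) + series_tail (\<lambda>i. g (lam i)) Phi r y z"
        for r y z
        unfolding kg_sum by (rule Kg.suminf_eq_partial_plus_tail)
    qed (use elim eigdec K.series_tail_diag_nonneg K.series_tail_Cauchy_Schwarz
        Kg.series_tail_diag_nonneg Kg.series_tail_Cauchy_Schwarz k_bound g_lipschitz g0
        K.integral_series_tail_tendsto_zero[OF prob_mu Phi_meas k_diag]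
        Kg.integral_series_tail_tendsto_zero[OF prob_mu Phi_meas kg_diag] in auto)
  qed
qed

end
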